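(* (i) For every $B\in\mathrm{M}_2(E_1)$, \[\{\mathrm{tr}(B)\mathrm{tr}(B^2)-\mathrm{tr}(B^3)\}I_2-\mathrm{tr}(B^2)B-\mathrm{tr}(B)B^2+2B^3=0.\] (ii) For every $B\in\mathrm{M}_3(E_1)$, \[\Big\{-\tfrac12\mathrm{tr}(B^2)^2\mathrm{tr}(B)+\mathrm{tr}(B^3)\mathrm{tr}(B^2)+\tfrac12\mathrm{tr}(B^4)\mathrm{tr}(B)-\mathrm{tr}(B^5)\Big\}I_3+\Big\{\tfrac12\mathrm{tr}(B^2)^2-\tfrac12\mathrm{tr}(B^4)\Big\}B\] \[+\{\mathrm{tr}(B^2)\mathrm{tr}(B)-\mathrm{tr}(B^3)\}B^2-2\mathrm{tr}(B^2)B^3-\mathrm{tr}(B)B^4+3B^5=0.\]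
   Context: $K$ is a field of characteristic zero. $E$ is the infinite-dimensional Grassmann (exterior) algebra over $K$, generated by countably many indeterminates $v_1,v_2,\dots$ subject to $v_iv_j+v_jv_i=0$ for all $i,j$. $E=E_0\oplus E_1$ is its natural $\mathbb{Z}_2$-grading: $E_0$ (resp. $E_1$) is the $K$-span of products of an even (resp. odd) number of generators. $\mathrm{M}_n(E_1)$ denotes the $n\times n$ matrices with entries in $E_1$, $I_n$ the identity matrix, $\mathrm{tr}$ the sum of diagonal entries; $\mathrm{tr}(B^2)^2$ means $(\mathrm{tr}(B^2))^2$. *)

theory Defs
  imports Main
begin

text \<open>Grassmann algebra E over a field K (type 'a) on generators v_0, v_1, ... .
An element is a coefficient function on finite sets of generator indices
(monomial v_S = product of v_i, i in S, in increasing order) with finite support.\<close>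

type_synonym 'a grass = "nat set \<Rightarrow> 'a"

definition gsign :: "nat set \<Rightarrow> nat set \<Rightarrow> 'a::comm_ring_1" where
  "gsign S T = (-1) ^ card {(i,j). i \<in> S \<and> j \<in> T \<and> j < i}"

definition gzero :: "'a::comm_ring_1 grass" where "gzero = (\<lambda>U. 0)"
definition gone :: "'a::comm_ring_1 grass" where "gone = (\<lambda>U. if U = {} then 1 else 0)"
definition gadd :: "'a::comm_ring_1 grass \<Rightarrow> 'a grass \<Rightarrow> 'a grass" where
  "gadd x y = (\<lambda>U. x U + y U)"
definition gsub :: "'a::comm_ring_1 grass \<Rightarrow> 'a grass \<Rightarrow> 'a grass" where
  "gsub x y = (\<lambda>U. x U - y U)"
definition gscal :: "'a::comm_ring_1 \<Rightarrow> 'a grass \<Rightarrow> 'a grass" where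
  "gscal c x = (\<lambda>U. c * x U)"
text \<open>v_S v_T = gsign S T v_(S \<union> T) if S, T disjoint, and 0 otherwise.\<close>
definition gmul :: "'a::comm_ring_1 grass \<Rightarrow> 'a grass \<Rightarrow> 'a grass" where
  "gmul x y = (\<lambda>U. if finite U then (\<Sum>S\<in>Pow U. gsign S (U - S) * x S * y (U - S)) else 0)"

definition is_grass :: "'a::comm_ring_1 grass \<Rightarrow> bool" where
  "is_grass x \<longleftrightarrow> finite {S. x S \<noteq> 0} \<and> (\<forall>S. x S \<noteq> 0 \<longrightarrow> finite S)"

definition is_odd_grass :: "'a::comm_ring_1 grass \<Rightarrow> bool" where
  "is_odd_grass x \<longleftrightarrow> is_grass x \<and> (\<forall>S. x S \<noteq> 0 \<longrightarrow> odd (card S))"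

text \<open>n x n matrices over E, as functions nat => nat => grass (only indices < n matter).\<close>
type_synonym 'a gmat = "nat \<Rightarrow> nat \<Rightarrow> 'a grass"

definition gsum :: "nat \<Rightarrow> (nat \<Rightarrow> 'a::comm_ring_1 grass) \<Rightarrow> 'a grass" where
  "gsum n f = (\<lambda>U. \<Sum>k<n. f k U)"

definition mone :: "'a::comm_ring_1 gmat" where
  "mone = (\<lambda>i j. if i = j then gone else gzero)"
definition mmul :: "nat \<Rightarrow> 'a::comm_ring_1 gmat \<Rightarrow> 'a gmat \<Rightarrow> 'a gmat" where
  "mmul n A B = (\<lambda>i j. gsum n (\<lambda>k. gmul (A i k) (B k j)))"
fun mpow :: "nat \<Rightarrow> 'a::comm_ring_1 gmat \<Rightarrow> nat \<Rightarrow> 'a gmat" where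
  "mpow n B 0 = mone"
| "mpow n B (Suc k) = mmul n (mpow n B k) B"
definition mtr :: "nat \<Rightarrow> 'a::comm_ring_1 gmat \<Rightarrow> 'a grass" where
  "mtr n A = gsum n (\<lambda>i. A i i)"
definition madd :: "'a::comm_ring_1 gmat \<Rightarrow> 'a gmat \<Rightarrow> 'a gmat" where
  "madd A B = (\<lambda>i j. gadd (A i j) (B i j))"
definition melt :: "'a::comm_ring_1 grass \<Rightarrow> 'a gmat \<Rightarrow> 'a gmat" where
  "melt c A = (\<lambda>i j. gmul c (A i j))"
definition mscal :: "'a::comm_ring_1 \<Rightarrow> 'a gmat \<Rightarrow> 'a gmat" where
  "mscal c A = (\<lambda>i j. gscal c (A i j))"

definition is_zero_mat :: "nat \<Rightarrow> 'a::comm_ring_1 gmat \<Rightarrow> bool" where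
  "is_zero_mat n A \<longleftrightarrow> (\<forall>i<n. \<forall>j<n. A i j = gzero)"

end

theory Submission
  imports Defs
begin

text \<open>Odd elements of E anticommute and, in characteristic zero, square to zero, so a
  matrix B over E_1 becomes, inside the ring E, a matrix with pairwise anticommuting entries.
  In each monomial of tr(B^(p+1)), moving the first factor past the other p factors to the end
  of the cycle costs the sign (-1)^p; hence the traces of even powers vanish. What is left of
  (i) and (ii) is n B^(2n-1) = sum_k tr(B^(2k-1)) B^(2n-2k) for n = 2, 3, an identity for the
  generic matrix with anticommuting square-zero entries, which is checked by expanding the
  powers and sorting the monomials.\<close>

definition cross_inversions :: "nat set \<Rightarrow> nat set \<Rightarrow> nat" where
  "cross_inversions S T = card {(i, j). i \<in> S \<and> j \<in> T \<and> j < i}"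

lemma gsign_eq_power: "gsign S T = (-1) ^ cross_inversions S T"
  by (simp add: gsign_def cross_inversions_def)

lemma finite_cross_inversion_pairs:
  "finite S \<Longrightarrow> finite T \<Longrightarrow> finite {(i, j). i \<in> S \<and> j \<in> T \<and> j < i}"
  by (rule finite_subset[of _ "S \<times> T"]) auto

lemma cross_inversions_Un_left:
  assumes "finite S" "finite S'" "finite T" "S \<inter> S' = {}"
  shows "cross_inversions (S \<union> S') T = cross_inversions S T + cross_inversions S' T"
proof -
  have "{(i, j). i \<in> S \<union> S' \<and> j \<in> T \<and> j < i} =
        {(i, j). i \<in> S \<and> j \<in> T \<and> j < i} \<union> {(i, j). i \<in> S' \<and> j \<in> T \<and> j < i}"
    by auto
  moreover have "{(i, j). i \<in> S \<and> j \<in> T \<and> j < i} \<inter> {(i, j). i \<in> S' \<and> j \<in> T \<and> j < i} = {}"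
    using assms(4) by auto
  ultimately show ?thesis
    unfolding cross_inversions_def by (simp add: card_Un_disjoint finite_cross_inversion_pairs assms)
qed

lemma cross_inversions_Un_right:
  assumes "finite S" "finite T" "finite T'" "T \<inter> T' = {}"
  shows "cross_inversions S (T \<union> T') = cross_inversions S T + cross_inversions S T'"
proof -
  have "{(i, j). i \<in> S \<and> j \<in> T \<union> T' \<and> j < i} =
        {(i, j). i \<in> S \<and> j \<in> T \<and> j < i} \<union> {(i, j). i \<in> S \<and> j \<in> T' \<and> j < i}"
    by auto
  moreover have "{(i, j). i \<in> S \<and> j \<in> T \<and> j < i} \<inter> {(i, j). i \<in> S \<and> j \<in> T' \<and> j < i} = {}"
    using assms(4) by auto
  ultimately show ?thesis
    unfolding cross_inversions_def by (simp add: card_Un_disjoint finite_cross_inversion_pairs assms)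
qed

lemma cross_inversions_swap:
  assumes "finite S" "finite T" "S \<inter> T = {}"
  shows "cross_inversions S T + cross_inversions T S = card S * card T"
proof -
  let ?below = "{(i, j). i \<in> S \<and> j \<in> T \<and> j < i}"
  let ?above = "{(i, j). i \<in> S \<and> j \<in> T \<and> i < j}"
  have "prod.swap ` {(i, j). i \<in> T \<and> j \<in> S \<and> j < i} = ?above"
  proof (rule set_eqI)
    fix p :: "nat \<times> nat"
    show "p \<in> prod.swap ` {(i, j). i \<in> T \<and> j \<in> S \<and> j < i} \<longleftrightarrow> p \<in> ?above"
      by (cases p) (simp add: image_iff, blast)
  qed
  moreover have "cross_inversions T S = card (prod.swap ` {(i, j). i \<in> T \<and> j \<in> S \<and> j < i})"
    unfolding cross_inversions_def by (simp add: card_image)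
  ultimately have above: "cross_inversions T S = card ?above" by simp
  have cover: "?below \<union> ?above = S \<times> T"
  proof (intro set_eqI iffI)
    fix p assume "p \<in> S \<times> T"
    moreover have "fst p \<noteq> snd p" using calculation assms(3) by auto
    ultimately show "p \<in> ?below \<union> ?above" by (cases p) (auto simp: nat_neq_iff)
  qed auto
  have "finite ?above"
    by (rule finite_subset[of _ "S \<times> T"]) (auto simp: assms)
  then have "card ?below + card ?above = card (?below \<union> ?above)"
    by (intro card_Un_disjoint[symmetric] finite_cross_inversion_pairs assms) auto
  also have "\<dots> = card S * card T"
    unfolding cover by (rule card_cartesian_product)
  finally have "card ?below + card ?above = card S * card T" .
  then show ?thesis using above by (simp add: cross_inversions_def)
qed

lemma gsign_empty_left [simp]: "gsign {} T = 1"
  by (simp add: gsign_def)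

lemma gsign_empty_right [simp]: "gsign S {} = 1"
  by (simp add: gsign_def)

lemma gsign_Un_left:
  "finite S \<Longrightarrow> finite S' \<Longrightarrow> finite T \<Longrightarrow> S \<inter> S' = {} \<Longrightarrow>
    gsign (S \<union> S') T = (gsign S T * gsign S' T :: 'a::comm_ring_1)"
  by (simp add: gsign_eq_power cross_inversions_Un_left power_add)

lemma gsign_Un_right:
  "finite S \<Longrightarrow> finite T \<Longrightarrow> finite T' \<Longrightarrow> T \<inter> T' = {} \<Longrightarrow>
    gsign S (T \<union> T') = (gsign S T * gsign S T' :: 'a::comm_ring_1)"
  by (simp add: gsign_eq_power cross_inversions_Un_right power_add)

lemma gsign_cocycle:
  assumes "finite U" "R \<subseteq> S" "S \<subseteq> U"
  shows "(gsign S (U - S) * gsign R (S - R) :: 'a::comm_ring_1) =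
    gsign R (U - R) * gsign (S - R) (U - S)"
proof -
  have "finite S" using assms(3,1) by (rule finite_subset)
  then have fin: "finite S" "finite R" "finite (U - S)" "finite (S - R)"
    using finite_subset assms by auto
  have "(gsign S (U - S) :: 'a) = gsign (R \<union> (S - R)) (U - S)"
    using assms(2) by (simp add: Un_absorb1)
  also have "\<dots> = gsign R (U - S) * gsign (S - R) (U - S)"
    by (rule gsign_Un_left) (use fin in auto)
  finally have left: "(gsign S (U - S) :: 'a) = gsign R (U - S) * gsign (S - R) (U - S)" .
  have "U - R = (S - R) \<union> (U - S)"
    using assms(2,3) by auto
  then have "(gsign R (U - R) :: 'a) = gsign R ((S - R) \<union> (U - S))"
    by simp
  also have "\<dots> = gsign R (S - R) * gsign R (U - S)"
    by (rule gsign_Un_right) (use fin in auto)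
  finally have right: "(gsign R (U - R) :: 'a) = gsign R (S - R) * gsign R (U - S)" .
  show ?thesis unfolding left right by (simp only: mult_ac)
qed

lemma gmul_assoc: "gmul (gmul x y) z = gmul x (gmul y z)"
proof
  fix U
  show "gmul (gmul x y) z U = gmul x (gmul y z) U"
  proof (cases "finite U")
    case False
    then show ?thesis by (simp add: gmul_def)
  next
    case True
    have fin: "\<And>S. S \<in> Pow U \<Longrightarrow> finite S"
      using True finite_subset by auto
    have "gmul (gmul x y) z U = (\<Sum>S\<in>Pow U. \<Sum>R\<in>Pow S.
        gsign S (U - S) * gsign R (S - R) * (x R * y (S - R) * z (U - S)))"
      using True fin by (simp add: gmul_def sum_distrib_left sum_distrib_right algebra_simps)
    also have "\<dots> = (\<Sum>S\<in>Pow U. \<Sum>R\<in>{R. R \<in> Pow U \<and> R \<subseteq> S}.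
        gsign R (U - R) * gsign (S - R) (U - S) * (x R * y (S - R) * z (U - S)))"
    proof (rule sum.cong[OF refl])
      fix S assume S: "S \<in> Pow U"
      then have "{R. R \<in> Pow U \<and> R \<subseteq> S} = Pow S" by auto
      with S True show "(\<Sum>R\<in>Pow S. gsign S (U - S) * gsign R (S - R) * (x R * y (S - R) * z (U - S))) =
        (\<Sum>R\<in>{R. R \<in> Pow U \<and> R \<subseteq> S}.
          gsign R (U - R) * gsign (S - R) (U - S) * (x R * y (S - R) * z (U - S)))"
        by (auto intro!: sum.cong simp: gsign_cocycle)
    qed
    also have "\<dots> = (\<Sum>R\<in>Pow U. \<Sum>S\<in>{S. S \<in> Pow U \<and> R \<subseteq> S}.
        gsign R (U - R) * gsign (S - R) (U - S) * (x R * y (S - R) * z (U - S)))"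
      by (rule sum.swap_restrict) (simp_all add: True)
    also have "\<dots> = (\<Sum>R\<in>Pow U. \<Sum>Q\<in>Pow (U - R).
        gsign R (U - R) * gsign Q (U - R - Q) * (x R * y Q * z (U - R - Q)))"
    proof (rule sum.cong[OF refl])
      fix R assume R: "R \<in> Pow U"
      have "U - R - (S - R) = U - S" if "R \<subseteq> S" for S
        using that by auto
      then show "(\<Sum>S\<in>{S. S \<in> Pow U \<and> R \<subseteq> S}.
          gsign R (U - R) * gsign (S - R) (U - S) * (x R * y (S - R) * z (U - S))) =
        (\<Sum>Q\<in>Pow (U - R). gsign R (U - R) * gsign Q (U - R - Q) * (x R * y Q * z (U - R - Q)))"
        by (intro sum.reindex_bij_witness[where j = "\<lambda>S. S - R" and i = "\<lambda>Q. R \<union> Q"])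
          (use R in \<open>auto simp: Un_Diff\<close>)
    qed
    also have "\<dots> = gmul x (gmul y z) U"
      using True fin by (simp add: gmul_def sum_distrib_left sum_distrib_right algebra_simps)
    finally show ?thesis .
  qed
qed

definition restrict_finite :: "'a::comm_ring_1 grass \<Rightarrow> 'a grass" where
  "restrict_finite x = (\<lambda>U. if finite U then x U else 0)"

lemma gmul_gone_left: "gmul gone x = restrict_finite x"
proof
  fix U
  show "gmul gone x U = restrict_finite x U"
  proof (cases "finite U")
    case True
    have "gmul gone x U = (\<Sum>S\<in>Pow U. gsign S (U - S) * gone S * x (U - S))"
      using True by (simp add: gmul_def)
    also have "\<dots> = (\<Sum>S\<in>Pow U. if S = {} then x U else 0)"
      by (rule sum.cong) (auto simp: gone_def)
    finally show ?thesis using True by (simp add: restrict_finite_def)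
  qed (simp add: gmul_def restrict_finite_def)
qed

lemma gmul_gone_right: "gmul x gone = restrict_finite x"
proof
  fix U
  show "gmul x gone U = restrict_finite x U"
  proof (cases "finite U")
    case True
    have "gmul x gone U = (\<Sum>S\<in>Pow U. gsign S (U - S) * x S * gone (U - S))"
      using True by (simp add: gmul_def)
    also have "\<dots> = (\<Sum>S\<in>Pow U. if S = U then x U else 0)"
      by (rule sum.cong) (auto simp: gone_def)
    finally show ?thesis using True by (simp add: restrict_finite_def)
  qed (simp add: gmul_def restrict_finite_def)
qed

lemma gmul_restrict_finite_left: "gmul (restrict_finite x) y = gmul x y"
  by (auto simp: gmul_def restrict_finite_def fun_eq_iff intro!: sum.cong dest: finite_subset)

lemma gmul_restrict_finite_right: "gmul x (restrict_finite y) = gmul x y"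
  by (auto simp: gmul_def restrict_finite_def fun_eq_iff intro!: sum.cong)

lemma gmul_gadd_left: "gmul (gadd x y) z = gadd (gmul x z) (gmul y z)"
  by (auto simp: gmul_def gadd_def fun_eq_iff sum.distrib algebra_simps)

lemma gmul_gadd_right: "gmul z (gadd x y) = gadd (gmul z x) (gmul z y)"
  by (auto simp: gmul_def gadd_def fun_eq_iff sum.distrib algebra_simps)

lemma gmul_gscal_left: "gmul (gscal c x) y = gscal c (gmul x y)"
  by (auto simp: gmul_def gscal_def fun_eq_iff sum_distrib_left algebra_simps)

lemma gsign_odd_swap:
  assumes "finite S" "finite T" "S \<inter> T = {}" "odd (card S)" "odd (card T)"
  shows "gsign S T = - gsign T S"
proof -
  have "odd (cross_inversions S T + cross_inversions T S)"
    using cross_inversions_swap[OF assms(1-3)] assms(4,5) by simp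
  then show ?thesis
    by (cases "even (cross_inversions S T)") (auto simp: gsign_eq_power)
qed

lemma gmul_odd_anticommute:
  assumes x: "is_odd_grass x" and y: "is_odd_grass y"
  shows "gmul x y = gscal (-1) (gmul y x)"
proof
  fix U
  show "gmul x y U = gscal (-1) (gmul y x) U"
  proof (cases "finite U")
    case False
    then show ?thesis by (simp add: gmul_def gscal_def)
  next
    case True
    have "gmul y x U = (\<Sum>T\<in>Pow U. gsign T (U - T) * y T * x (U - T))"
      using True by (simp add: gmul_def)
    also have "\<dots> = (\<Sum>S\<in>Pow U. gsign (U - S) (U - (U - S)) * y (U - S) * x (U - (U - S)))"
      by (rule sum.reindex_bij_witness[where i = "\<lambda>S. U - S" and j = "\<lambda>S. U - S"])
        (auto simp: Diff_Diff_Int Int_absorb1)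
    also have "\<dots> = (\<Sum>S\<in>Pow U. gsign (U - S) S * y (U - S) * x S)"
      by (rule sum.cong) (auto simp: double_diff)
    also have "\<dots> = - (\<Sum>S\<in>Pow U. gsign S (U - S) * x S * y (U - S))"
      unfolding sum_negf[symmetric]
    proof (rule sum.cong[OF refl])
      fix S assume S: "S \<in> Pow U"
      show "gsign (U - S) S * y (U - S) * x S = - (gsign S (U - S) * x S * y (U - S))"
      proof (cases "x S = 0 \<or> y (U - S) = 0")
        case False
        then have "odd (card S)" "odd (card (U - S))"
          using x y by (auto simp: is_odd_grass_def)
        with S True have "gsign S (U - S) = (- gsign (U - S) S :: 'a)"
          by (intro gsign_odd_swap) (auto intro: finite_subset)
        then show ?thesis by (simp add: algebra_simps)
      qed auto
    qed
    finally show ?thesis using True by (simp add: gmul_def gscal_def)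
  qed
qed

text \<open>Coefficient functions may carry junk entries at infinite index sets, where \<open>gmul\<close>
  is defined to be 0; the ring E consists of the functions vanishing there, and
  \<open>grassmann_of\<close> discards the junk.\<close>

definition zero_on_infinite :: "'a::comm_ring_1 grass \<Rightarrow> bool" where
  "zero_on_infinite x \<longleftrightarrow> (\<forall>U. infinite U \<longrightarrow> x U = 0)"

typedef (overloaded) 'a grassmann = "{x :: 'a::comm_ring_1 grass. zero_on_infinite x}"
  by (rule exI[of _ gzero]) (simp add: zero_on_infinite_def gzero_def)

setup_lifting type_definition_grassmann

lemma zero_on_infinite_restrict_finite [simp]: "zero_on_infinite (restrict_finite x)"
  by (simp add: zero_on_infinite_def restrict_finite_def)

lemma restrict_finite_id: "zero_on_infinite x \<Longrightarrow> restrict_finite x = x"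
  by (auto simp: zero_on_infinite_def restrict_finite_def)

instantiation grassmann :: (comm_ring_1) ring_1
begin

lift_definition zero_grassmann :: "'a grassmann" is gzero
  by (simp add: zero_on_infinite_def gzero_def)

lift_definition one_grassmann :: "'a grassmann" is gone
  by (simp add: zero_on_infinite_def gone_def)

lift_definition plus_grassmann :: "'a grassmann \<Rightarrow> 'a grassmann \<Rightarrow> 'a grassmann" is gadd
  by (simp add: zero_on_infinite_def gadd_def)

lift_definition uminus_grassmann :: "'a grassmann \<Rightarrow> 'a grassmann" is "gscal (-1)"
  by (simp add: zero_on_infinite_def gscal_def)

lift_definition minus_grassmann :: "'a grassmann \<Rightarrow> 'a grassmann \<Rightarrow> 'a grassmann" is gsub
  by (simp add: zero_on_infinite_def gsub_def)

lift_definition times_grassmann :: "'a grassmann \<Rightarrow> 'a grassmann \<Rightarrow> 'a grassmann" is gmul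
  by (simp add: zero_on_infinite_def gmul_def)

instance
proof
  fix a b c :: "'a grassmann"
  show "a * b * c = a * (b * c)"
    by transfer (rule gmul_assoc)
  show "1 * a = a"
    by transfer (simp add: gmul_gone_left restrict_finite_id)
  show "a * 1 = a"
    by transfer (simp add: gmul_gone_right restrict_finite_id)
  show "(a + b) * c = a * c + b * c"
    by transfer (rule gmul_gadd_left)
  show "a * (b + c) = a * b + a * c"
    by transfer (rule gmul_gadd_right)
  show "a + b + c = a + (b + c)"
    by transfer (simp add: gadd_def algebra_simps)
  show "a + b = b + a"
    by transfer (simp add: gadd_def algebra_simps)
  show "0 + a = a"
    by transfer (simp add: gadd_def gzero_def)
  show "- a + a = 0"
    by transfer (simp add: gadd_def gscal_def gzero_def)
  show "a - b = a + - b"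
    by transfer (simp add: gadd_def gsub_def gscal_def)
  show "(0 :: 'a grassmann) \<noteq> 1"
    by transfer (simp add: gzero_def gone_def fun_eq_iff)
qed

end

lift_definition grassmann_of :: "'a::comm_ring_1 grass \<Rightarrow> 'a grassmann" is restrict_finite
  by simp

lift_definition grassmann_const :: "'a::comm_ring_1 \<Rightarrow> 'a grassmann" is "\<lambda>c. gscal c gone"
  by (simp add: zero_on_infinite_def gscal_def gone_def)

lemma zero_on_infinite_gmul [simp]: "zero_on_infinite (gmul x y)"
  by (simp add: zero_on_infinite_def gmul_def)

lemma zero_on_infinite_gadd [simp]: "zero_on_infinite x \<Longrightarrow> zero_on_infinite y \<Longrightarrow> zero_on_infinite (gadd x y)"
  by (simp add: zero_on_infinite_def gadd_def)

lemma zero_on_infinite_gscal [simp]: "zero_on_infinite x \<Longrightarrow> zero_on_infinite (gscal c x)"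
  by (simp add: zero_on_infinite_def gscal_def)

lemma zero_on_infinite_mpow [simp]: "zero_on_infinite (mpow n B k i j)"
  by (cases k) (simp_all add: zero_on_infinite_def mone_def gone_def gzero_def mmul_def gsum_def gmul_def)

lemma grassmann_of_eq_zeroD: "zero_on_infinite x \<Longrightarrow> grassmann_of x = 0 \<Longrightarrow> x = gzero"
  by transfer (simp add: restrict_finite_id)

lemma grassmann_of_gmul [simp]: "grassmann_of (gmul x y) = grassmann_of x * grassmann_of y"
  by transfer (simp add: gmul_restrict_finite_left gmul_restrict_finite_right restrict_finite_id)

lemma grassmann_of_gadd [simp]: "grassmann_of (gadd x y) = grassmann_of x + grassmann_of y"
  by transfer (simp add: restrict_finite_def gadd_def fun_eq_iff)

lemma grassmann_of_gsub [simp]: "grassmann_of (gsub x y) = grassmann_of x - grassmann_of y"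
  by transfer (simp add: restrict_finite_def gsub_def fun_eq_iff)

lemma grassmann_of_gscal [simp]: "grassmann_of (gscal c x) = grassmann_const c * grassmann_of x"
  by transfer (simp only: gmul_gscal_left gmul_gone_left, simp add: restrict_finite_def gscal_def fun_eq_iff)

lemma grassmann_of_gone [simp]: "grassmann_of gone = 1"
  by transfer (simp add: restrict_finite_id zero_on_infinite_def gone_def)

lemma grassmann_of_gzero [simp]: "grassmann_of gzero = 0"
  by transfer (simp add: restrict_finite_id zero_on_infinite_def gzero_def)

lemma grassmann_of_mone [simp]: "grassmann_of (mone i j) = (if i = j then 1 else 0)"
  by (simp add: mone_def)

lemma grassmann_of_gsum [simp]: "grassmann_of (gsum n f) = (\<Sum>k<n. grassmann_of (f k))"
proof (induction n)
  case 0
  have "gsum 0 f = gzero" by (simp add: gsum_def gzero_def)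
  then show ?case by simp
next
  case (Suc n)
  have "gsum (Suc n) f = gadd (gsum n f) (f n)" by (simp add: gsum_def gadd_def)
  with Suc show ?case by simp
qed

lemma grassmann_const_of_nat: "grassmann_const (of_nat m) = of_nat m"
proof (induction m)
  case 0
  show ?case
    unfolding of_nat_0 by transfer (simp add: gscal_def gzero_def)
next
  case (Suc m)
  have "grassmann_const (1 + c) = 1 + grassmann_const c" for c :: 'a
    by transfer (simp add: gscal_def gadd_def gone_def fun_eq_iff)
  with Suc show ?case by simp
qed

lemma grassmann_const_numeral [simp]: "grassmann_const (numeral k) = numeral k"
  using grassmann_const_of_nat[of "numeral k"] by simp

lemma grassmann_const_uminus [simp]: "grassmann_const (- c) = - grassmann_const c"
  by transfer (simp add: gscal_def fun_eq_iff)

lemma grassmann_const_one [simp]: "grassmann_const 1 = 1"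
  using grassmann_const_of_nat[of 1] by simp

lemma grassmann_odd_anticommute:
  assumes "is_odd_grass x" "is_odd_grass y"
  shows "grassmann_of x * grassmann_of y = - (grassmann_of y * grassmann_of x)"
proof -
  have "grassmann_of x * grassmann_of y = grassmann_of (gmul x y)"
    by simp
  also have "\<dots> = grassmann_of (gscal (-1) (gmul y x))"
    by (simp only: gmul_odd_anticommute[OF assms])
  finally show ?thesis by simp
qed

lemma grassmann_eq_uminus_imp_zero:
  fixes x :: "'a::field_char_0 grassmann"
  assumes "x = - x"
  shows "x = 0"
proof -
  have "Rep_grassmann x U = - Rep_grassmann x U" for U
    using arg_cong[OF assms, of "\<lambda>x. Rep_grassmann x U"] by (simp add: uminus_grassmann.rep_eq gscal_def)
  then show ?thesis
    by (simp add: Rep_grassmann_inject[symmetric] zero_grassmann.rep_eq gzero_def fun_eq_iff)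
qed

definition mat_mul :: "nat \<Rightarrow> (nat \<Rightarrow> nat \<Rightarrow> 'r::semiring_1) \<Rightarrow> (nat \<Rightarrow> nat \<Rightarrow> 'r) \<Rightarrow> nat \<Rightarrow> nat \<Rightarrow> 'r"
  where "mat_mul n A B = (\<lambda>i j. \<Sum>l<n. A i l * B l j)"

fun mat_pow :: "nat \<Rightarrow> (nat \<Rightarrow> nat \<Rightarrow> 'r::semiring_1) \<Rightarrow> nat \<Rightarrow> nat \<Rightarrow> nat \<Rightarrow> 'r" where
  "mat_pow n A 0 = (\<lambda>i j. if i = j then 1 else 0)"
| "mat_pow n A (Suc k) = mat_mul n (mat_pow n A k) A"

definition mat_trace :: "nat \<Rightarrow> (nat \<Rightarrow> nat \<Rightarrow> 'r::semiring_1) \<Rightarrow> 'r" where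
  "mat_trace n A = (\<Sum>i<n. A i i)"

lemma mat_mul_assoc: "mat_mul n (mat_mul n A B) C = mat_mul n A (mat_mul n B C)"
  by (auto simp: mat_mul_def fun_eq_iff sum_distrib_left sum_distrib_right mult.assoc
      intro: sum.swap)

text \<open>The index bounds are needed: \<open>mat_pow n A 0\<close> is the identity only on indices
  below \<open>n\<close>.\<close>

lemma mat_pow_Suc_left:
  assumes "i < n" "j < n"
  shows "mat_pow n A (Suc k) i j = mat_mul n A (mat_pow n A k) i j"
  using assms
proof (induction k arbitrary: i j)
  case 0
  then show ?case by (simp add: mat_mul_def if_distrib if_distribR cong: if_cong)
next
  case (Suc k)
  have "mat_pow n A (Suc (Suc k)) i j = (\<Sum>l<n. mat_pow n A (Suc k) i l * A l j)"
    by (simp only: mat_pow.simps(2) mat_mul_def)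
  also have "\<dots> = (\<Sum>l<n. mat_mul n A (mat_pow n A k) i l * A l j)"
    using Suc by (intro sum.cong) auto
  also have "\<dots> = mat_mul n (mat_mul n A (mat_pow n A k)) A i j"
    by (simp add: mat_mul_def)
  also have "\<dots> = mat_mul n A (mat_pow n A (Suc k)) i j"
    by (simp add: mat_mul_assoc)
  finally show ?case .
qed

definition anticommuting_entries :: "nat \<Rightarrow> (nat \<Rightarrow> nat \<Rightarrow> 'r::ring_1) \<Rightarrow> bool" where
  "anticommuting_entries n M \<longleftrightarrow> (\<forall>i<n. \<forall>j<n. \<forall>k<n. \<forall>l<n. M i j * M k l = - (M k l * M i j))"

lemma mat_pow_entry_anticommute:
  assumes M: "anticommuting_entries n M" and "i < n" "j < n" "k < n" "l < n"
  shows "mat_pow n M p i j * M k l = (-1) ^ p * (M k l * mat_pow n M p i j)"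
  using assms(3)
proof (induction p arbitrary: j)
  case 0
  then show ?case by simp
next
  case (Suc p)
  have "mat_pow n M (Suc p) i j * M k l = (\<Sum>q<n. mat_pow n M p i q * (M q j * M k l))"
    by (simp add: mat_mul_def sum_distrib_right mult.assoc)
  also have "\<dots> = (\<Sum>q<n. - (mat_pow n M p i q * M k l * M q j))"
  proof (rule sum.cong)
    fix q assume "q \<in> {..<n}"
    then have "M q j * M k l = - (M k l * M q j)"
      using M Suc.prems \<open>k < n\<close> \<open>l < n\<close> unfolding anticommuting_entries_def by blast
    then show "mat_pow n M p i q * (M q j * M k l) = - (mat_pow n M p i q * M k l * M q j)"
      by (simp add: mult.assoc)
  qed simp
  also have "\<dots> = (\<Sum>q<n. - ((-1) ^ p * (M k l * (mat_pow n M p i q * M q j))))"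
    using Suc.IH by (intro sum.cong) (auto simp: mult.assoc)
  also have "\<dots> = (-1) ^ Suc p * (M k l * mat_pow n M (Suc p) i j)"
    by (simp add: mat_mul_def sum_distrib_left sum_negf)
  finally show ?case .
qed

lemma mat_trace_pow_Suc_sign:
  assumes "anticommuting_entries n M"
  shows "mat_trace n (mat_pow n M (Suc p)) = (-1) ^ p * mat_trace n (mat_pow n M (Suc p))"
proof -
  have "mat_trace n (mat_pow n M (Suc p)) = (\<Sum>i<n. \<Sum>l<n. mat_pow n M p i l * M l i)"
    by (simp add: mat_trace_def mat_mul_def)
  also have "\<dots> = (\<Sum>i<n. \<Sum>l<n. (-1) ^ p * (M l i * mat_pow n M p i l))"
    using mat_pow_entry_anticommute[OF assms] by (intro sum.cong) auto
  also have "\<dots> = (-1) ^ p * (\<Sum>l<n. \<Sum>i<n. M l i * mat_pow n M p i l)"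
    by (subst sum.swap) (simp add: sum_distrib_left)
  also have "\<dots> = (-1) ^ p * (\<Sum>l<n. mat_pow n M (Suc p) l l)"
  proof -
    have "(\<Sum>i<n. M l i * mat_pow n M p i l) = mat_pow n M (Suc p) l l" if "l < n" for l
      by (simp only: mat_pow_Suc_left[OF that that] mat_mul_def)
    then show ?thesis by (simp del: mat_pow.simps(2))
  qed
  finally show ?thesis by (simp only: mat_trace_def)
qed

lemma grassmann_mat_trace_even_pow:
  fixes M :: "nat \<Rightarrow> nat \<Rightarrow> 'a::field_char_0 grassmann"
  assumes "anticommuting_entries n M" "even p" "p > 0"
  shows "mat_trace n (mat_pow n M p) = 0"
proof -
  obtain q where p: "p = Suc q"
    using assms(3) by (cases p) auto
  with assms(2) have "odd q" by simp
  have "mat_trace n (mat_pow n M (Suc q)) = (-1) ^ q * mat_trace n (mat_pow n M (Suc q))"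
    by (rule mat_trace_pow_Suc_sign[OF assms(1)])
  also have "\<dots> = - mat_trace n (mat_pow n M (Suc q))"
    using \<open>odd q\<close> by simp
  finally show ?thesis
    unfolding p by (rule grassmann_eq_uminus_imp_zero)
qed

text \<open>Oriented along the row-major order of the indices, so that the simplifier sorts
  monomials in the entries.\<close>

lemma anticommuting_entries_sort:
  assumes "anticommuting_entries n M" "n * i + j < n * k + l" "i < n" "j < n" "k < n" "l < n"
  shows "M k l * M i j = - (M i j * M k l)"
    and "M k l * (M i j * z) = - (M i j * (M k l * z))"
proof -
  show swap: "M k l * M i j = - (M i j * M k l)"
    using assms unfolding anticommuting_entries_def by blast
  show "M k l * (M i j * z) = - (M i j * (M k l * z))"
    by (simp add: mult.assoc[symmetric] swap)
qed

lemma sum_lessThan_2: "(\<Sum>l<2. f l) = f 0 + f (1 :: nat)"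
  by (simp add: eval_nat_numeral)

lemma sum_lessThan_3: "(\<Sum>l<3. f l) = f 0 + f 1 + f (2 :: nat)"
  by (simp add: eval_nat_numeral)

lemma mat_pow_numeral: "mat_pow n A (numeral k) = mat_mul n (mat_pow n A (pred_numeral k)) A"
  by (simp add: numeral_eq_Suc)

lemma anticommuting_2x2_cubic_identity:
  fixes M :: "nat \<Rightarrow> nat \<Rightarrow> 'r::ring_1"
  assumes anti: "anticommuting_entries 2 M"
    and square: "\<And>i j. i < 2 \<Longrightarrow> j < 2 \<Longrightarrow> M i j * M i j = 0"
    and "i < 2" "j < 2"
  shows "2 * mat_pow 2 M 3 i j =
    mat_trace 2 M * mat_pow 2 M 2 i j + mat_trace 2 (mat_pow 2 M 3) * mat_pow 2 M 0 i j"
proof -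
  have square': "M i j * (M i j * z) = 0" if "i < 2" "j < 2" for i j z
    using square[OF that] by (simp add: mult.assoc[symmetric])
  have unit: "mat_trace 2 (mat_pow 2 M 3) * mat_pow 2 M 0 i j =
      (if i = j then mat_trace 2 (mat_pow 2 M 3) else 0)"
    by simp
  have "i = 0 \<or> i = 1" "j = 0 \<or> j = 1"
    using assms(3,4) by auto
  then show ?thesis
    unfolding unit by (elim disjE) (simp_all add: mat_pow_numeral mat_mul_def mat_trace_def sum_lessThan_2
        anticommuting_entries_sort[OF anti] square square' mult_2 algebra_simps)
qed

lemma anticommuting_3x3_quintic_identity:
  fixes M :: "nat \<Rightarrow> nat \<Rightarrow> 'r::ring_1"
  assumes anti: "anticommuting_entries 3 M"
    and square: "\<And>i j. i < 3 \<Longrightarrow> j < 3 \<Longrightarrow> M i j * M i j = 0"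
    and "i < 3" "j < 3"
  shows "3 * mat_pow 3 M 5 i j =
    mat_trace 3 M * mat_pow 3 M 4 i j + mat_trace 3 (mat_pow 3 M 3) * mat_pow 3 M 2 i j +
    mat_trace 3 (mat_pow 3 M 5) * mat_pow 3 M 0 i j"
proof -
  have square': "M i j * (M i j * z) = 0" if "i < 3" "j < 3" for i j z
    using square[OF that] by (simp add: mult.assoc[symmetric])
  have three: "3 * x = x + x + x" for x :: 'r
    by (metis distrib_right mult_1 numeral_Bit1 numeral_One)
  have unit: "mat_trace 3 (mat_pow 3 M 5) * mat_pow 3 M 0 i j =
      (if i = j then mat_trace 3 (mat_pow 3 M 5) else 0)"
    by simp
  have "i = 0 \<or> i = 1 \<or> i = 2" "j = 0 \<or> j = 1 \<or> j = 2"
    using assms(3,4) by auto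
  then show ?thesis
    unfolding unit by (elim disjE) (simp_all add: mat_pow_numeral mat_mul_def mat_trace_def sum_lessThan_3
        anticommuting_entries_sort[OF anti] square square' three algebra_simps)
qed

lemma grassmann_of_mpow [simp]:
  "grassmann_of (mpow n B k i j) = mat_pow n (\<lambda>i j. grassmann_of (B i j)) k i j"
  by (induction k arbitrary: i j) (simp_all add: mmul_def mone_def mat_mul_def)

lemma grassmann_of_mtr [simp]: "grassmann_of (mtr n A) = mat_trace n (\<lambda>i j. grassmann_of (A i j))"
  by (simp add: mtr_def mat_trace_def)

lemma is_zero_mat_grassmannI:
  assumes "\<And>i j. i < n \<Longrightarrow> j < n \<Longrightarrow> grassmann_of (A i j) = 0"
    and "\<And>i j. i < n \<Longrightarrow> j < n \<Longrightarrow> zero_on_infinite (A i j)"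
  shows "is_zero_mat n A"
  unfolding is_zero_mat_def using assms by (blast intro: grassmann_of_eq_zeroD)

lemma grassmann_odd_square:
  fixes x :: "'a::field_char_0 grass"
  assumes "is_odd_grass x"
  shows "grassmann_of x * grassmann_of x = 0"
  using grassmann_odd_anticommute[OF assms assms] by (rule grassmann_eq_uminus_imp_zero)

lemma odd_grassmann_matrix:
  fixes B :: "'a::field_char_0 gmat"
  assumes "\<forall>i<n. \<forall>j<n. is_odd_grass (B i j)"
  shows "anticommuting_entries n (\<lambda>i j. grassmann_of (B i j))"
    and "\<And>i j. i < n \<Longrightarrow> j < n \<Longrightarrow> grassmann_of (B i j) * grassmann_of (B i j) = 0"
proof -
  show "anticommuting_entries n (\<lambda>i j. grassmann_of (B i j))"
    unfolding anticommuting_entries_def using assms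
    by (intro allI impI grassmann_odd_anticommute) auto
  show "grassmann_of (B i j) * grassmann_of (B i j) = 0" if "i < n" "j < n" for i j
    using assms that by (intro grassmann_odd_square) auto
qed

theorem corollary2p7:
  fixes B C :: "'a::field_char_0 gmat"
  shows "((\<forall>i<2. \<forall>j<2. is_odd_grass (B i j)) \<longrightarrow>
      is_zero_mat 2
        (madd (melt (gsub (gmul (mtr 2 B) (mtr 2 (mpow 2 B 2))) (mtr 2 (mpow 2 B 3))) mone)
        (madd (mscal (-1) (melt (mtr 2 (mpow 2 B 2)) B))
        (madd (mscal (-1) (melt (mtr 2 B) (mpow 2 B 2)))
              (mscal 2 (mpow 2 B 3)))))) \<and>
      ((\<forall>i<3. \<forall>j<3. is_odd_grass (C i j)) \<longrightarrow>
      is_zero_mat 3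
        (madd (melt
           (gadd (gscal (- 1/2) (gmul (gmul (mtr 3 (mpow 3 C 2)) (mtr 3 (mpow 3 C 2))) (mtr 3 C)))
           (gadd (gmul (mtr 3 (mpow 3 C 3)) (mtr 3 (mpow 3 C 2)))
           (gadd (gscal (1/2) (gmul (mtr 3 (mpow 3 C 4)) (mtr 3 C)))
                 (gscal (-1) (mtr 3 (mpow 3 C 5)))))) mone)
        (madd (melt
           (gadd (gscal (1/2) (gmul (mtr 3 (mpow 3 C 2)) (mtr 3 (mpow 3 C 2))))
                 (gscal (- 1/2) (mtr 3 (mpow 3 C 4)))) C)
        (madd (melt (gsub (gmul (mtr 3 (mpow 3 C 2)) (mtr 3 C)) (mtr 3 (mpow 3 C 3))) (mpow 3 C 2))
        (madd (mscal (-2) (melt (mtr 3 (mpow 3 C 2)) (mpow 3 C 3)))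
        (madd (mscal (-1) (melt (mtr 3 C) (mpow 3 C 4)))
              (mscal 3 (mpow 3 C 5))))))))"
  apply (intro conjI impI is_zero_mat_grassmannI)
  subgoal premises odd for i j
  proof -
    note entries = odd_grassmann_matrix[OF odd(1)]
    have "mat_trace 2 (mat_pow 2 (\<lambda>i j. grassmann_of (B i j)) 2) = 0"
      using entries(1) by (rule grassmann_mat_trace_even_pow) auto
    with anticommuting_2x2_cubic_identity[OF entries odd(2,3)] show ?thesis
      by (simp add: madd_def melt_def mscal_def algebra_simps)
  qed
  subgoal by (simp add: madd_def melt_def mscal_def)
  subgoal premises odd for i j
  proof -
    note entries = odd_grassmann_matrix[OF odd(1)]
    have "mat_trace 3 (mat_pow 3 (\<lambda>i j. grassmann_of (C i j)) 2) = 0"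
      and "mat_trace 3 (mat_pow 3 (\<lambda>i j. grassmann_of (C i j)) 4) = 0"
      using entries(1) by (rule grassmann_mat_trace_even_pow; simp)+
    with anticommuting_3x3_quintic_identity[OF entries odd(2,3)] show ?thesis
      by (simp add: madd_def melt_def mscal_def algebra_simps)
  qed
  subgoal by (simp add: madd_def melt_def mscal_def)
  done

end
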